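(* Let $\mathcal{D}=(X,\mathcal{B})$ be a $(v,k,\lambda)$ symmetric design of order $q=k-\lambda\geq 2$. Then there exists a semi-resolving set for the points of $\mathcal{D}$ of size $\left\lceil \frac{v\log v}{k-\lambda}\right\rceil$, i.e. a set $S_\mathcal{B}\subseteq\mathcal{B}$ of this size such that for every pair of distinct points $x,y\in X$ some block $B\in S_\mathcal{B}$ satisfies $d(x,B)\neq d(y,B)$ in the incidence graph of $\mathcal{D}$ (equivalently, $B$ contains exactly one of $x,y$).
   Context: A symmetric design with parameters $(v,k,\lambda)$ is a pair $(X,\mathcal{B})$ where $X$ is a set of $v$ points and $\mathcal{B}$ is a family of $k$-subsets of $X$ (blocks) such that any two distinct points lie in exactly $\lambda$ blocks and any two distinct blocks meet in exactly $\lambda$ points. Its order is $q=k-\lambda$. The incidence graph is the bipartite graph on $X\cup\mathcal{B}$ with $x$ adjacent to $B$ iff $x\in B$; $d$ is graph distance. $\log$ denotes the natural logarithm. *)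

theory Defs
  imports "HOL-Analysis.Analysis" "HOL-Library.Extended_Nat"
begin

definition symmetric_design :: "'a set \<Rightarrow> 'a set set \<Rightarrow> nat \<Rightarrow> nat \<Rightarrow> nat \<Rightarrow> bool" where
  "symmetric_design X Bs v k lam \<longleftrightarrow>
     finite X \<and> card X = v \<and> card Bs = v \<and>
     (\<forall>B\<in>Bs. B \<subseteq> X \<and> card B = k) \<and>
     (\<forall>x\<in>X. \<forall>y\<in>X. x \<noteq> y \<longrightarrow> card {B \<in> Bs. x \<in> B \<and> y \<in> B} = lam) \<and>
     (\<forall>B\<in>Bs. \<forall>C\<in>Bs. B \<noteq> C \<longrightarrow> card (B \<inter> C) = lam)"

definition inc_adj :: "'a set \<Rightarrow> 'a set set \<Rightarrow> ('a + 'a set) \<Rightarrow> ('a + 'a set) \<Rightarrow> bool" where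
  "inc_adj X Bs u w \<longleftrightarrow>
     (\<exists>x B. x \<in> X \<and> B \<in> Bs \<and> x \<in> B \<and> ((u = Inl x \<and> w = Inr B) \<or> (u = Inr B \<and> w = Inl x)))"

definition inc_dist :: "'a set \<Rightarrow> 'a set set \<Rightarrow> ('a + 'a set) \<Rightarrow> ('a + 'a set) \<Rightarrow> enat" where
  "inc_dist X Bs u w =
     (if \<exists>n. (inc_adj X Bs ^^ n) u w then enat (LEAST n. (inc_adj X Bs ^^ n) u w) else \<infinity>)"

end

theory Submission
  imports Defs
begin

text \<open>A point x and a block B are at distance 1 in the incidence graph iff x \<in> B, so it suffices
  to find blocks such that every pair of distinct points is split by one of them. In a symmetric
  design every point lies on k blocks, hence two distinct points are split by exactly 2q of the
  v blocks. Choosing blocks greedily, each new block splits at least a fraction 2q/v of the pairs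
  not yet split, so after N \<ge> v ln v / q steps fewer than v^2 (1 - 2q/v)^N \<le> 1 pairs remain.
  The counting identity k(k - 1) = (v - 1) \<lambda> bounds v by q^2 + q + 1 \<le> e^q, so that N \<le> v
  and the selection can be padded to exactly N blocks.\<close>

lemma sum_card_filter_swap:
  assumes "finite A" "finite B"
  shows "(\<Sum>a\<in>A. card {b\<in>B. P a b}) = (\<Sum>b\<in>B. card {a\<in>A. P a b})"
proof -
  have card_filter: "card {x\<in>C. Q x} = (\<Sum>x\<in>C. if Q x then 1 else 0)" if "finite C" for C Q
    using sum.inter_filter[OF that, of "\<lambda>_. 1::nat" Q] by simp
  show ?thesis
    using assms by (simp add: card_filter sum.swap[of "\<lambda>a b. if P a b then 1 else 0"])
qed

definition uncovered :: "('p \<Rightarrow> 'b \<Rightarrow> bool) \<Rightarrow> 'p set \<Rightarrow> 'b set \<Rightarrow> 'p set" where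
  "uncovered R U S = {p\<in>U. \<forall>B\<in>S. \<not> R p B}"

lemma uncovered_insert: "uncovered R U (insert B S) = uncovered R U S - {p. R p B}"
  by (auto simp: uncovered_def)

lemma greedy_cover_step:
  assumes "finite U" "finite Bs" "Bs \<noteq> {}"
    and covers: "\<And>p. p \<in> U \<Longrightarrow> m \<le> card {B\<in>Bs. R p B}"
  obtains B where "B \<in> Bs"
    "real (card (uncovered R U (insert B S)))
       \<le> real (card (uncovered R U S)) * (1 - real m / real (card Bs))"
proof -
  define P where "P = uncovered R U S"
  have fP: "finite P" using \<open>finite U\<close> by (simp add: P_def uncovered_def)
  define gain where "gain B = card {p\<in>P. R p B}" for B
  \<comment> \<open>Double counting: on average a block covers at least a fraction m / card Bs of P.\<close>
  have "card P * m \<le> (\<Sum>p\<in>P. card {B\<in>Bs. R p B})"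
    using covers sum_mono[of P "\<lambda>_. m"] by (force simp: P_def uncovered_def)
  also have "\<dots> = (\<Sum>B\<in>Bs. gain B)"
    unfolding gain_def by (rule sum_card_filter_swap[OF fP \<open>finite Bs\<close>])
  finally have "card P * m \<le> (\<Sum>B\<in>Bs. gain B)" .
  have "\<exists>B\<in>Bs. card P * m \<le> gain B * card Bs"
  proof (rule ccontr)
    assume "\<not> ?thesis"
    then have "(\<Sum>B\<in>Bs. gain B * card Bs) < (\<Sum>B\<in>Bs. card P * m)"
      using \<open>finite Bs\<close> \<open>Bs \<noteq> {}\<close> by (intro sum_strict_mono) auto
    then show False
      using \<open>card P * m \<le> (\<Sum>B\<in>Bs. gain B)\<close> by (simp add: sum_distrib_right[symmetric])
  qed
  then obtain B where B: "B \<in> Bs" "card P * m \<le> gain B * card Bs" by blast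
  have "uncovered R U (insert B S) = P - {p\<in>P. R p B}"
    by (auto simp: P_def uncovered_insert)
  then have "card (uncovered R U (insert B S)) = card P - gain B"
    using fP by (simp add: gain_def card_Diff_subset)
  moreover have "gain B \<le> card P" unfolding gain_def by (rule card_mono[OF fP]) auto
  moreover have "real (card P) * real m \<le> real (gain B) * real (card Bs)"
    using B(2) by (metis of_nat_le_iff of_nat_mult)
  moreover have "0 < card Bs" using \<open>finite Bs\<close> \<open>Bs \<noteq> {}\<close> by (simp add: card_gt_0_iff)
  ultimately have "real (card (uncovered R U (insert B S))) \<le> real (card P) * (1 - real m / real (card Bs))"
    by (simp add: of_nat_diff field_simps)
  then show ?thesis using that[OF B(1)] by (simp add: P_def)
qed

lemma greedy_cover:
  assumes "finite U" "finite Bs" "Bs \<noteq> {}" "m \<le> card Bs"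
    and covers: "\<And>p. p \<in> U \<Longrightarrow> m \<le> card {B\<in>Bs. R p B}"
  shows "\<exists>S\<subseteq>Bs. card S \<le> t \<and>
           real (card (uncovered R U S)) \<le> real (card U) * (1 - real m / real (card Bs)) ^ t"
proof (induction t)
  case 0
  show ?case by (intro exI[of _ "{}"]) (simp add: uncovered_def)
next
  case (Suc t)
  define \<rho> where "\<rho> = 1 - real m / real (card Bs)"
  have "0 < card Bs" using assms(2,3) card_gt_0_iff by blast
  then have "0 \<le> \<rho>" using assms(4) by (simp add: \<rho>_def)
  from Suc.IH obtain S where S: "S \<subseteq> Bs" "card S \<le> t"
    "real (card (uncovered R U S)) \<le> real (card U) * \<rho> ^ t"
    unfolding \<rho>_def by blast
  obtain B where B: "B \<in> Bs" "real (card (uncovered R U (insert B S)))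
       \<le> real (card (uncovered R U S)) * \<rho>"
    using greedy_cover_step[where R=R and S=S, OF assms(1-3) covers, folded \<rho>_def] by blast
  have "real (card (uncovered R U (insert B S))) \<le> real (card U) * \<rho> ^ t * \<rho>"
    using B(2) mult_right_mono[OF S(3) \<open>0 \<le> \<rho>\<close>] by linarith
  then have "real (card (uncovered R U (insert B S))) \<le> real (card U) * \<rho> ^ Suc t"
    by (simp add: algebra_simps)
  moreover have "card (insert B S) \<le> Suc t"
    using S(2) card_insert_le_m1[of "Suc t" S] by simp
  ultimately show ?case using S(1) B(1) unfolding \<rho>_def by (intro exI[of _ "insert B S"]) auto
qed

lemma one_minus_power_le_inverse:
  fixes p w :: real
  assumes "0 \<le> p" "p \<le> 1" "0 < w" "ln w \<le> p * real N"
  shows "(1 - p) ^ N \<le> 1 / w"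
proof -
  have "(1 - p) ^ N \<le> exp (- p) ^ N"
    using assms(2) by (intro power_mono) (auto simp: exp_ge_add_one_self[of "- p", simplified])
  also have "\<dots> = exp (- (p * real N))" by (simp add: exp_of_nat_mult[symmetric] mult.commute)
  also have "\<dots> \<le> exp (- ln w)" using assms(4) by simp
  also have "\<dots> = 1 / w" using assms(3) by (simp add: exp_minus inverse_eq_divide)
  finally show ?thesis .
qed

lemma exists_cover:
  assumes "finite U" "finite Bs" "Bs \<noteq> {}" "m \<le> card Bs"
    and covers: "\<And>p. p \<in> U \<Longrightarrow> m \<le> card {B\<in>Bs. R p B}"
    and "real (card U) < w" "ln w \<le> real m / real (card Bs) * real t"
  shows "\<exists>S\<subseteq>Bs. card S \<le> t \<and> (\<forall>p\<in>U. \<exists>B\<in>S. R p B)"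
proof -
  obtain S where S: "S \<subseteq> Bs" "card S \<le> t"
    "real (card (uncovered R U S)) \<le> real (card U) * (1 - real m / real (card Bs)) ^ t"
    using greedy_cover[where R=R and t=t, OF assms(1-4) covers] by blast
  have "0 < w" using assms(6) by linarith
  have "real m / real (card Bs) \<le> 1" using assms(4) by (auto simp: divide_le_eq_1)
  then have "(1 - real m / real (card Bs)) ^ t \<le> 1 / w"
    using assms(7) \<open>0 < w\<close> by (intro one_minus_power_le_inverse) auto
  then have "real (card (uncovered R U S)) \<le> real (card U) * (1 / w)"
    using S(3) by (meson mult_left_mono of_nat_0_le_iff order_trans)
  also have "\<dots> < 1" using assms(6) \<open>0 < w\<close> by simp
  finally have "uncovered R U S = {}"
    using \<open>finite U\<close> by (simp add: uncovered_def)
  then show ?thesis using S(1,2) by (auto simp: uncovered_def)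
qed

lemma symmetric_design_finite_blocks:
  assumes "symmetric_design X Bs v k lam" "x \<in> X"
  shows "finite Bs"
proof -
  have "finite X" "card X = v" "card Bs = v" using assms(1) unfolding symmetric_design_def by auto
  then have "0 < card Bs" using assms(2) card_gt_0_iff by force
  then show ?thesis using card_ge_0_finite by blast
qed

lemma symmetric_design_degree_equation:
  assumes "symmetric_design X Bs v k lam" "x \<in> X"
  shows "card {B\<in>Bs. x \<in> B} * (k - 1) = (v - 1) * lam"
proof -
  have fX: "finite X" and cX: "card X = v"
    and blocks: "\<And>B. B \<in> Bs \<Longrightarrow> B \<subseteq> X \<and> card B = k"
    and pairs: "\<And>y. y \<in> X - {x} \<Longrightarrow> card {B\<in>Bs. x \<in> B \<and> y \<in> B} = lam"
    using assms unfolding symmetric_design_def by auto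
  have fB: "finite Bs" using symmetric_design_finite_blocks[OF assms] .
  \<comment> \<open>Count the flags (y, B) with x, y \<in> B and y \<noteq> x in two ways.\<close>
  have "(v - 1) * lam = (\<Sum>y\<in>X-{x}. card {B\<in>Bs. x \<in> B \<and> y \<in> B})"
    using fX cX assms(2) pairs by simp
  also have "\<dots> = (\<Sum>B\<in>Bs. card {y\<in>X-{x}. x \<in> B \<and> y \<in> B})"
    using fX fB by (intro sum_card_filter_swap) auto
  also have "\<dots> = (\<Sum>B\<in>Bs. if x \<in> B then k - 1 else 0)"
  proof (rule sum.cong)
    fix B assume "B \<in> Bs"
    then have "x \<in> B \<Longrightarrow> {y\<in>X-{x}. x \<in> B \<and> y \<in> B} = B - {x}" using blocks by auto
    then show "card {y\<in>X-{x}. x \<in> B \<and> y \<in> B} = (if x \<in> B then k - 1 else 0)"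
      using blocks[OF \<open>B \<in> Bs\<close>] by auto
  qed simp
  also have "\<dots> = card {B\<in>Bs. x \<in> B} * (k - 1)"
    using fB by (simp add: sum.inter_filter[symmetric])
  finally show ?thesis by simp
qed

lemma symmetric_design_fundamental_equation:
  assumes "symmetric_design X Bs v k lam" "0 < v"
  shows "k * (k - 1) = (v - 1) * lam"
proof -
  have fX: "finite X" and cX: "card X = v" and cB: "card Bs = v"
    and blocks: "\<And>B. B \<in> Bs \<Longrightarrow> B \<subseteq> X \<and> card B = k"
    using assms(1) unfolding symmetric_design_def by auto
  have fB: "finite Bs" using cB assms(2) card_ge_0_finite by blast
  have "(\<Sum>B\<in>Bs. card {x\<in>X. x \<in> B}) = (\<Sum>B\<in>Bs. k)"
  proof (rule sum.cong)
    fix B assume "B \<in> Bs"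
    then show "card {x\<in>X. x \<in> B} = k" using blocks[of B] by (simp add: Int_absorb1 Collect_conj_eq)
  qed simp
  then have "v * (k * (k - 1)) = (\<Sum>x\<in>X. card {B\<in>Bs. x \<in> B}) * (k - 1)"
    using cB by (simp add: sum_card_filter_swap[OF fX fB])
  also have "\<dots> = (\<Sum>x\<in>X. card {B\<in>Bs. x \<in> B} * (k - 1))"
    by (rule sum_distrib_right)
  also have "\<dots> = v * ((v - 1) * lam)"
    using symmetric_design_degree_equation[OF assms(1)] cX by simp
  finally show ?thesis using assms(2) by simp
qed

lemma symmetric_design_replication:
  assumes "symmetric_design X Bs v k lam" "2 \<le> k" "x \<in> X"
  shows "card {B\<in>Bs. x \<in> B} = k"
proof -
  have "finite X" "card X = v" using assms(1) unfolding symmetric_design_def by auto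
  then have "0 < v" using assms(3) card_gt_0_iff by blast
  then have "card {B\<in>Bs. x \<in> B} * (k - 1) = k * (k - 1)"
    using symmetric_design_degree_equation[OF assms(1,3)]
      symmetric_design_fundamental_equation[OF assms(1)] by simp
  moreover have "k - 1 \<noteq> 0" using assms(2) by simp
  ultimately show ?thesis using mult_right_cancel by blast
qed

lemma symmetric_design_card_splitting_blocks:
  assumes "symmetric_design X Bs v k lam" "2 \<le> k" "x \<in> X" "y \<in> X" "x \<noteq> y"
  shows "card {B\<in>Bs. (x \<in> B) \<noteq> (y \<in> B)} = 2 * (k - lam)"
proof -
  have fB: "finite Bs" using symmetric_design_finite_blocks[OF assms(1,3)] .
  have only: "card {B\<in>Bs. a \<in> B \<and> b \<notin> B} = k - lam" if "a \<in> X" "b \<in> X" "a \<noteq> b" for a b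
  proof -
    have "{B\<in>Bs. a \<in> B \<and> b \<notin> B} = {B\<in>Bs. a \<in> B} - {B\<in>Bs. a \<in> B \<and> b \<in> B}" by auto
    moreover have "card {B\<in>Bs. a \<in> B \<and> b \<in> B} = lam"
      using assms(1) that unfolding symmetric_design_def by blast
    moreover have "card ({B\<in>Bs. a \<in> B} - {B\<in>Bs. a \<in> B \<and> b \<in> B})
        = card {B\<in>Bs. a \<in> B} - card {B\<in>Bs. a \<in> B \<and> b \<in> B}"
      using fB by (intro card_Diff_subset) auto
    ultimately show ?thesis using symmetric_design_replication[OF assms(1,2) that(1)] by simp
  qed
  have "{B\<in>Bs. (x \<in> B) \<noteq> (y \<in> B)} = {B\<in>Bs. x \<in> B \<and> y \<notin> B} \<union> {B\<in>Bs. y \<in> B \<and> x \<notin> B}"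
    by auto
  then show ?thesis
    using fB only[OF assms(3-5)] only[OF assms(4,3) assms(5)[symmetric]]
    by (simp add: card_Un_disjoint disjoint_iff)
qed

lemma symmetric_design_card_points_le:
  assumes "symmetric_design X Bs v k lam" "2 \<le> k - lam"
  shows "v \<le> (k - lam)\<^sup>2 + (k - lam) + 1"
proof (cases "v = 0")
  case False
  \<comment> \<open>With k = \<lambda> + q the fundamental equation reads \<lambda> (v - \<lambda> - 2q) = q (q - 1) > 0, so both
    factors are positive and v - 2q = \<lambda> + (v - \<lambda> - 2q) \<le> \<lambda> (v - \<lambda> - 2q) + 1.\<close>
  define l Q V where "l = int lam" and "Q = int (k - lam)" and "V = int v"
  have "int (k * (k - 1)) = int ((v - 1) * lam)"
    using symmetric_design_fundamental_equation[OF assms(1)] False by simp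
  moreover have "int k = l + Q" using assms(2) by (simp add: l_def Q_def)
  ultimately have "(l + Q) * (l + Q - 1) = (V - 1) * l"
    using assms(2) False by (simp add: l_def V_def of_nat_diff)
  then have lb: "l * (V - l - 2 * Q) = Q * Q - Q" by (simp add: algebra_simps)
  have "2 \<le> Q" using assms(2) by (simp add: Q_def)
  then have "0 < Q * (Q - 1)" by (simp add: zero_less_mult_iff)
  then have "0 < Q * Q - Q" by (simp add: algebra_simps)
  then have "0 < l * (V - l - 2 * Q)" using lb by simp
  moreover have "0 \<le> l" by (simp add: l_def)
  ultimately have "0 < l" "0 < V - l - 2 * Q" by (auto simp: zero_less_mult_iff)
  then have "0 \<le> (l - 1) * (V - l - 2 * Q - 1)" by simp
  then have "V \<le> Q * Q + Q + 1" using lb by (simp add: algebra_simps)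
  then have "int v \<le> int ((k - lam)\<^sup>2 + (k - lam) + 1)"
    by (simp add: V_def Q_def power2_eq_square)
  then show ?thesis by (simp only: of_nat_le_iff)
qed simp

lemma power2_add_self_add_one_le_exp:
  assumes "2 \<le> n"
  shows "real n ^ 2 + real n + 1 \<le> exp (real n)"
  using assms
proof (induction n rule: nat_induct_at_least)
  case base
  have "(7::real) \<le> (1 + 2 / real (50::nat)) ^ 50" by (simp add: power_divide)
  also have "\<dots> \<le> exp 2" by (rule exp_ge_one_plus_x_over_n_power_n) auto
  finally show ?case by simp
next
  case (Suc n)
  have "(5/2::real) \<le> (1 + 1 / real (10::nat)) ^ 10" by (simp add: power_divide)
  also have "\<dots> \<le> exp 1" by (rule exp_ge_one_plus_x_over_n_power_n) auto
  finally have e: "5/2 \<le> exp (1::real)" .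
  have "2 \<le> real n" using Suc.hyps by simp
  moreover have "2 * real n \<le> real n * real n" using Suc.hyps by (intro mult_right_mono) auto
  ultimately have "1 + real n \<le> real n * (real n * 3)" by linarith
  then have "real (Suc n) ^ 2 + real (Suc n) + 1 \<le> (real n ^ 2 + real n + 1) * (5/2)"
    by (simp add: power2_eq_square field_simps)
  also have "\<dots> \<le> exp (real n) * exp 1" using Suc.IH e by (intro mult_mono) auto
  also have "\<dots> = exp (real (Suc n))" by (simp add: exp_add[symmetric])
  finally show ?case .
qed

lemma symmetric_design_ln_card_points_le:
  assumes "symmetric_design X Bs v k lam" "2 \<le> k - lam" "0 < v"
  shows "ln (real v) \<le> real (k - lam)"
proof -
  have "real v \<le> real ((k - lam)\<^sup>2 + (k - lam) + 1)"
    using symmetric_design_card_points_le[OF assms(1,2)] by (simp only: of_nat_le_iff)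
  also have "\<dots> \<le> exp (real (k - lam))"
    using power2_add_self_add_one_le_exp[OF assms(2)] by simp
  finally have "ln (real v) \<le> ln (exp (real (k - lam)))"
    using assms(3) by (intro ln_mono) auto
  then show ?thesis by simp
qed

lemma inc_dist_point_block_eq_1_iff:
  assumes "x \<in> X" "B \<in> Bs"
  shows "inc_dist X Bs (Inl x) (Inr B) = 1 \<longleftrightarrow> x \<in> B"
proof -
  define walk where "walk n = (inc_adj X Bs ^^ n) (Inl x) (Inr B)" for n
  have "inc_dist X Bs (Inl x) (Inr B) = 1 \<longleftrightarrow> (\<exists>n. walk n) \<and> (LEAST n. walk n) = 1"
    by (simp add: inc_dist_def walk_def one_enat_def)
  also have "\<dots> \<longleftrightarrow> walk 1"
  proof
    assume "(\<exists>n. walk n) \<and> (LEAST n. walk n) = 1"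
    then show "walk 1" by (metis LeastI_ex)
  next
    assume "walk 1"
    moreover have "1 \<le> n" if "walk n" for n
      using that by (cases n) (auto simp: walk_def)
    ultimately show "(\<exists>n. walk n) \<and> (LEAST n. walk n) = 1" by (metis Least_equality)
  qed
  also have "\<dots> \<longleftrightarrow> x \<in> B" using assms by (auto simp: walk_def inc_adj_def)
  finally show ?thesis .
qed

lemma card_offdiagonal_less:
  assumes "finite X" "X \<noteq> {}"
  shows "card {p\<in>X \<times> X. fst p \<noteq> snd p} < card X ^ 2"
proof -
  obtain x where "x \<in> X" using assms(2) by blast
  then have "(x, x) \<in> X \<times> X - {p\<in>X \<times> X. fst p \<noteq> snd p}" by simp
  then have "{p\<in>X \<times> X. fst p \<noteq> snd p} \<subset> X \<times> X" by blast
  then show ?thesis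
    using assms(1) psubset_card_mono[of "X \<times> X"] by (simp add: card_cartesian_product power2_eq_square)
qed

definition splits_points :: "'a set \<Rightarrow> 'a set set \<Rightarrow> bool" where
  "splits_points X S \<longleftrightarrow> (\<forall>x\<in>X. \<forall>y\<in>X. x \<noteq> y \<longrightarrow> (\<exists>B\<in>S. (x \<in> B) \<noteq> (y \<in> B)))"

lemma splits_points_mono: "splits_points X S \<Longrightarrow> S \<subseteq> T \<Longrightarrow> splits_points X T"
  unfolding splits_points_def by (meson subsetD)

lemma symmetric_design_splits_points_card_le:
  assumes "symmetric_design X Bs v k lam" "2 \<le> k - lam" "2 \<le> v"
    and "real v * ln (real v) \<le> real (k - lam) * real t"
  shows "\<exists>S\<subseteq>Bs. card S \<le> t \<and> splits_points X S"
proof -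
  define q where "q = k - lam"
  have fX: "finite X" and cX: "card X = v" and cB: "card Bs = v"
    using assms(1) unfolding symmetric_design_def by auto
  have "\<not> card X \<le> Suc 0" using assms(3) cX by simp
  then obtain a b where ab: "a \<in> X" "b \<in> X" "a \<noteq> b" using card_le_Suc0_iff_eq[OF fX] by blast
  have "0 < card Bs" using assms(3) cB by simp
  then have fB: "finite Bs" "Bs \<noteq> {}" using card_gt_0_iff by blast+
  define U where "U = {p\<in>X \<times> X. fst p \<noteq> snd p}"
  define split where "split p B \<longleftrightarrow> (fst p \<in> B) \<noteq> (snd p \<in> B)" for p :: "'a \<times> 'a" and B
  have splits: "card {B\<in>Bs. split p B} = 2 * q" if p: "p \<in> U" for p
  proof -
    obtain x y where "p = (x, y)" "x \<in> X" "y \<in> X" "x \<noteq> y"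
      using p unfolding U_def by (cases p) auto
    then show ?thesis
      using symmetric_design_card_splitting_blocks[OF assms(1), of x y] assms(2)
      by (simp add: split_def q_def)
  qed
  have "(a, b) \<in> U" using ab by (simp add: U_def)
  then have "2 * q \<le> card Bs"
    using splits card_mono[OF fB(1), of "{B\<in>Bs. split (a, b) B}"] by fastforce
  have ln_bound: "ln (real v ^ 2) \<le> real (2 * q) / real (card Bs) * real t"
    using assms(3,4) cB by (simp add: ln_realpow field_simps q_def)
  have "card U < v ^ 2" using card_offdiagonal_less[OF fX] ab cX by (auto simp: U_def)
  then have card_U: "real (card U) < real v ^ 2" by (metis of_nat_less_iff of_nat_power)
  have "finite U" using fX by (simp add: U_def)
  obtain S where S: "S \<subseteq> Bs" "card S \<le> t" "\<forall>p\<in>U. \<exists>B\<in>S. split p B"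
    using exists_cover[where R=split, OF \<open>finite U\<close> fB \<open>2 * q \<le> card Bs\<close> _ card_U ln_bound]
      splits by fastforce
  have "splits_points X S"
    unfolding splits_points_def
  proof (intro ballI impI)
    fix x y assume "x \<in> X" "y \<in> X" "x \<noteq> y"
    then have "(x, y) \<in> U" by (simp add: U_def)
    then obtain B where "B \<in> S" "split (x, y) B" using S(3) by blast
    then show "\<exists>B\<in>S. (x \<in> B) \<noteq> (y \<in> B)" by (auto simp: split_def)
  qed
  then show ?thesis using S(1,2) by blast
qed

lemma symmetric_design_splits_points:
  assumes "symmetric_design X Bs v k lam" "2 \<le> k - lam"
  shows "\<exists>S\<subseteq>Bs. card S = nat \<lceil>real v * ln (real v) / real (k - lam)\<rceil> \<and> splits_points X S"
proof (cases "v \<le> 1")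
  case True
  have "finite X" "card X \<le> Suc 0" using assms(1) True unfolding symmetric_design_def by auto
  then have "\<forall>x\<in>X. \<forall>y\<in>X. x = y" using card_le_Suc0_iff_eq by blast
  then have "splits_points X {}" unfolding splits_points_def by blast
  moreover have "real v * ln (real v) = 0" using True by (auto simp: le_Suc_eq)
  ultimately show ?thesis by (intro exI[of _ "{}"]) auto
next
  case False
  define N where "N = nat \<lceil>real v * ln (real v) / real (k - lam)\<rceil>"
  have "0 < k - lam" using assms(2) by simp
  have "real v * ln (real v) / real (k - lam) \<le> real N"
    unfolding N_def by (rule real_nat_ceiling_ge)
  then have "real v * ln (real v) \<le> real (k - lam) * real N"
    using \<open>0 < k - lam\<close> by (simp add: pos_divide_le_eq mult.commute)
  then obtain S where S: "S \<subseteq> Bs" "card S \<le> N" "splits_points X S"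
    using symmetric_design_splits_points_card_le[OF assms] False by auto
  have "ln (real v) \<le> real (k - lam)"
    using symmetric_design_ln_card_points_le[OF assms] False by simp
  then have "real v * ln (real v) \<le> real v * real (k - lam)" by (simp add: mult_left_mono)
  moreover have cB: "card Bs = v" using assms(1) unfolding symmetric_design_def by simp
  ultimately have "N \<le> card Bs"
    using \<open>0 < k - lam\<close> unfolding N_def nat_ceiling_le_eq by (simp add: pos_divide_le_eq)
  moreover have "finite Bs" using False cB by (intro card_ge_0_finite) simp
  ultimately obtain T where "S \<subseteq> T" "T \<subseteq> Bs" "card T = N"
    using exists_subset_between[OF S(2) _ S(1)] by blast
  then show ?thesis using splits_points_mono[OF S(3)] unfolding N_def by blast
qed

theorem theorem2p5:
  fixes X :: "'a set" and Bs :: "'a set set" and v k lam :: nat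
  assumes "symmetric_design X Bs v k lam"
    and "k - lam \<ge> 2"
  shows "\<exists>S \<subseteq> Bs. card S = nat \<lceil>real v * ln (real v) / real (k - lam)\<rceil> \<and>
           (\<forall>x\<in>X. \<forall>y\<in>X. x \<noteq> y \<longrightarrow>
              (\<exists>B\<in>S. inc_dist X Bs (Inl x) (Inr B) \<noteq> inc_dist X Bs (Inl y) (Inr B)))"
proof -
  obtain S where S: "S \<subseteq> Bs" "card S = nat \<lceil>real v * ln (real v) / real (k - lam)\<rceil>"
    and "splits_points X S"
    using symmetric_design_splits_points[OF assms] by blast
  have "\<exists>B\<in>S. inc_dist X Bs (Inl x) (Inr B) \<noteq> inc_dist X Bs (Inl y) (Inr B)"
    if xy: "x \<in> X" "y \<in> X" "x \<noteq> y" for x y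
  proof -
    have "\<exists>B\<in>S. (x \<in> B) \<noteq> (y \<in> B)"
      using \<open>splits_points X S\<close> xy unfolding splits_points_def by simp
    then obtain B where "B \<in> S" "(x \<in> B) \<noteq> (y \<in> B)" by blast
    moreover have "B \<in> Bs" using \<open>B \<in> S\<close> S(1) by blast
    ultimately show ?thesis
      using inc_dist_point_block_eq_1_iff[OF xy(1)] inc_dist_point_block_eq_1_iff[OF xy(2)] by metis
  qed
  then show ?thesis using S by blast
qed

end
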